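(* Let $D\ge 1$, $n_1,\dots,n_D\ge 1$, let $\mathcal{X}\in\mathbb{R}^{n_1\times\cdots\times n_D}$, let $\gamma\ge 0$, and for each $d\in\{1,\dots,D\}$ let $W_d=\{w_{d,ij}\}_{1\le i<j\le n_d}$ be a collection of nonnegative weights. Define, for $\mathcal{U}\in\mathbb{R}^{n_1\times\cdots\times n_D}$, $$F_\gamma(\mathcal{U})=\frac12\|\mathcal{X}-\mathcal{U}\|_F^2+\gamma\sum_{d=1}^D\sum_{1\le i<j\le n_d} w_{d,ij}\,\|\mathcal{U}\times_d\Delta_{d,ij}\|_F .$$ Then $F_\gamma$ has a unique minimizer $\widehat{\mathcal{U}}$, and the map $(\mathcal{X},\gamma,W_1,\dots,W_D)\mapsto\widehat{\mathcal{U}}$ is jointly continuous (on the set where $\gamma\ge0$ and all weights are nonnegative).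
   Context: $\|\cdot\|_F$ is the square root of the sum of squares of all entries of a tensor. For a tensor $\mathcal{A}\in\mathbb{R}^{n_1\times\cdots\times n_D}$ and a matrix $B\in\mathbb{R}^{m\times n_d}$, the $d$-mode product $\mathcal{A}\times_d B$ is the tensor of size $n_1\times\cdots\times n_{d-1}\times m\times n_{d+1}\times\cdots\times n_D$ with entries $(\mathcal{A}\times_d B)_{i_1\ldots i_{d-1} j i_{d+1}\ldots i_D}=\sum_{i_d=1}^{n_d}a_{i_1\ldots i_D}b_{j i_d}$. Here $\Delta_{d,ij}=e_i^\top-e_j^\top\in\mathbb{R}^{1\times n_d}$, where $e_i$ is the $i$th standard basis vector of $\mathbb{R}^{n_d}$; thus $\mathcal{U}\times_d\Delta_{d,ij}$ is the difference of the $i$th and $j$th mode-$d$ subarrays of $\mathcal{U}$ (the subarrays obtained by fixing the $d$th index to $i$, respectively $j$). *)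

theory Defs
  imports Complex_Main
begin

text \<open>Tensors of order D with mode sizes n 0, ..., n (D-1) (0-based modes and indices)
  are functions from multi-indices (nat => nat) to real, vanishing outside the index set.\<close>

definition idx_set :: "nat \<Rightarrow> (nat \<Rightarrow> nat) \<Rightarrow> (nat \<Rightarrow> nat) set" where
  "idx_set D n = {\<iota>. (\<forall>d<D. \<iota> d < n d) \<and> (\<forall>d. D \<le> d \<longrightarrow> \<iota> d = 0)}"

definition tensors :: "nat \<Rightarrow> (nat \<Rightarrow> nat) \<Rightarrow> ((nat \<Rightarrow> nat) \<Rightarrow> real) set" where
  "tensors D n = {U. \<forall>\<iota>. \<iota> \<notin> idx_set D n \<longrightarrow> U \<iota> = 0}"

definition frob :: "nat \<Rightarrow> (nat \<Rightarrow> nat) \<Rightarrow> ((nat \<Rightarrow> nat) \<Rightarrow> real) \<Rightarrow> real" where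
  "frob D n U = sqrt (\<Sum>\<iota>\<in>idx_set D n. (U \<iota>)\<^sup>2)"

definition mode_prod :: "nat \<Rightarrow> nat \<Rightarrow> ((nat \<Rightarrow> nat) \<Rightarrow> real) \<Rightarrow> (nat \<Rightarrow> nat \<Rightarrow> real)
    \<Rightarrow> ((nat \<Rightarrow> nat) \<Rightarrow> real)" where
  "mode_prod d nd A B = (\<lambda>\<iota>. \<Sum>k<nd. A (\<iota>(d := k)) * B (\<iota> d) k)"

text \<open>The 1 x n_d row matrix Delta_{ij} = e_i^T - e_j^T (only row 0 is used).\<close>
definition Delta :: "nat \<Rightarrow> nat \<Rightarrow> nat \<Rightarrow> nat \<Rightarrow> real" where
  "Delta i j = (\<lambda>r k. if r = 0 then (if k = i then 1 else 0) - (if k = j then 1 else 0) else 0)"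

definition objective :: "nat \<Rightarrow> (nat \<Rightarrow> nat) \<Rightarrow> ((nat \<Rightarrow> nat) \<Rightarrow> real) \<Rightarrow> real
    \<Rightarrow> (nat \<Rightarrow> nat \<Rightarrow> nat \<Rightarrow> real) \<Rightarrow> ((nat \<Rightarrow> nat) \<Rightarrow> real) \<Rightarrow> real" where
  "objective D n X \<gamma> w U =
     1/2 * (frob D n (\<lambda>\<iota>. X \<iota> - U \<iota>))\<^sup>2
     + \<gamma> * (\<Sum>d<D. \<Sum>i<n d. \<Sum>j\<in>{i<..<n d}.
              w d i j * frob D (n(d := 1)) (mode_prod d (n d) U (Delta i j)))"

definition admissible :: "nat \<Rightarrow> (nat \<Rightarrow> nat) \<Rightarrow> ((nat \<Rightarrow> nat) \<Rightarrow> real) \<Rightarrow> real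
    \<Rightarrow> (nat \<Rightarrow> nat \<Rightarrow> nat \<Rightarrow> real) \<Rightarrow> bool" where
  "admissible D n X \<gamma> w \<longleftrightarrow> X \<in> tensors D n \<and> 0 \<le> \<gamma> \<and>
     (\<forall>d<D. \<forall>i j. i < j \<and> j < n d \<longrightarrow> 0 \<le> w d i j)"

definition is_minimizer :: "nat \<Rightarrow> (nat \<Rightarrow> nat) \<Rightarrow> ((nat \<Rightarrow> nat) \<Rightarrow> real) \<Rightarrow> real
    \<Rightarrow> (nat \<Rightarrow> nat \<Rightarrow> nat \<Rightarrow> real) \<Rightarrow> ((nat \<Rightarrow> nat) \<Rightarrow> real) \<Rightarrow> bool" where
  "is_minimizer D n X \<gamma> w U \<longleftrightarrow> U \<in> tensors D n \<and>
     (\<forall>V\<in>tensors D n. objective D n X \<gamma> w U \<le> objective D n X \<gamma> w V)"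

definition minimizer :: "nat \<Rightarrow> (nat \<Rightarrow> nat) \<Rightarrow> ((nat \<Rightarrow> nat) \<Rightarrow> real) \<Rightarrow> real
    \<Rightarrow> (nat \<Rightarrow> nat \<Rightarrow> nat \<Rightarrow> real) \<Rightarrow> ((nat \<Rightarrow> nat) \<Rightarrow> real)" where
  "minimizer D n X \<gamma> w = (THE U. is_minimizer D n X \<gamma> w U)"

definition param_dist :: "nat \<Rightarrow> (nat \<Rightarrow> nat)
    \<Rightarrow> ((nat \<Rightarrow> nat) \<Rightarrow> real) \<Rightarrow> real \<Rightarrow> (nat \<Rightarrow> nat \<Rightarrow> nat \<Rightarrow> real)
    \<Rightarrow> ((nat \<Rightarrow> nat) \<Rightarrow> real) \<Rightarrow> real \<Rightarrow> (nat \<Rightarrow> nat \<Rightarrow> nat \<Rightarrow> real) \<Rightarrow> real" where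
  "param_dist D n X \<gamma> w X' \<gamma>' w' = sqrt (
      (\<Sum>\<iota>\<in>idx_set D n. (X \<iota> - X' \<iota>)\<^sup>2) + (\<gamma> - \<gamma>')\<^sup>2
      + (\<Sum>d<D. \<Sum>i<n d. \<Sum>j\<in>{i<..<n d}. (w d i j - w' d i j)\<^sup>2))"

end

theory Submission
  imports Defs "HOL-Analysis.Analysis"
begin

text \<open>
  Write F(U) = 1/2 ||X - U||^2 + P(U), where the penalty P is a nonnegative combination of the
  seminorms U |-> ||U x_d Delta_ij||, hence convex, continuous and Lipschitz.  A minimiser exists
  since F is continuous and every U outside a compact box around X is worse than 0.  Strong
  convexity of the quadratic term gives the growth bound F(V) >= F(U') + 1/2 ||V - U'||^2 at a
  minimiser U', hence uniqueness.  Adding the growth bounds for two parameter sets, each evaluated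
  at the other's minimiser, gives
    ||U' - U0'||^2 <= <X - X0, U' - U0'> + (P - P0)(U0') - (P - P0)(U'),
  and P - P0 is Lipschitz with a constant linear in the differences gamma w - gamma0 w0, so the
  minimiser depends locally Lipschitz continuously on the parameters.
\<close>

lemma L2_set_diff_abs_le:
  "\<bar>L2_set f A - L2_set g A\<bar> \<le> L2_set (\<lambda>x. f x - g x) A"
proof -
  have "L2_set f A \<le> L2_set g A + L2_set (\<lambda>x. f x - g x) A"
    using L2_set_triangle_ineq[of g "\<lambda>x. f x - g x" A] by simp
  moreover have "L2_set g A \<le> L2_set f A + L2_set (\<lambda>x. g x - f x) A"
    using L2_set_triangle_ineq[of f "\<lambda>x. g x - f x" A] by simp
  moreover have "L2_set (\<lambda>x. g x - f x) A = L2_set (\<lambda>x. f x - g x) A"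
    unfolding L2_set_def by (simp add: power2_commute)
  ultimately show ?thesis by linarith
qed

definition zero_outside :: "'a set \<Rightarrow> ('a \<Rightarrow> real) set" where
  "zero_outside I = {U. \<forall>\<iota>. \<iota> \<notin> I \<longrightarrow> U \<iota> = 0}"

definition convex_functional :: "(('a \<Rightarrow> real) \<Rightarrow> real) \<Rightarrow> bool" where
  "convex_functional P \<longleftrightarrow>
     (\<forall>U V t. 0 \<le> t \<and> t \<le> 1 \<longrightarrow> P (\<lambda>\<iota>. (1 - t) * U \<iota> + t * V \<iota>) \<le> (1 - t) * P U + t * P V)"

definition prox_obj :: "'a set \<Rightarrow> ('a \<Rightarrow> real) \<Rightarrow> (('a \<Rightarrow> real) \<Rightarrow> real) \<Rightarrow> ('a \<Rightarrow> real) \<Rightarrow> real" where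
  "prox_obj I X P U = 1/2 * (\<Sum>\<iota>\<in>I. (X \<iota> - U \<iota>)\<^sup>2) + P U"

definition is_prox_min :: "'a set \<Rightarrow> ('a \<Rightarrow> real) \<Rightarrow> (('a \<Rightarrow> real) \<Rightarrow> real) \<Rightarrow> ('a \<Rightarrow> real) \<Rightarrow> bool" where
  "is_prox_min I X P U \<longleftrightarrow>
     U \<in> zero_outside I \<and> (\<forall>V\<in>zero_outside I. prox_obj I X P U \<le> prox_obj I X P V)"

lemma sum_squares_convex_comb:
  fixes X U V :: "'a \<Rightarrow> real"
  shows "(\<Sum>\<iota>\<in>I. (X \<iota> - ((1 - t) * U \<iota> + t * V \<iota>))\<^sup>2)
     = (\<Sum>\<iota>\<in>I. (X \<iota> - U \<iota>)\<^sup>2) - 2 * t * (\<Sum>\<iota>\<in>I. (X \<iota> - U \<iota>) * (V \<iota> - U \<iota>))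
       + t\<^sup>2 * (\<Sum>\<iota>\<in>I. (V \<iota> - U \<iota>)\<^sup>2)"
proof -
  have "(\<Sum>\<iota>\<in>I. (X \<iota> - ((1 - t) * U \<iota> + t * V \<iota>))\<^sup>2)
      = (\<Sum>\<iota>\<in>I. (X \<iota> - U \<iota>)\<^sup>2 - 2 * t * ((X \<iota> - U \<iota>) * (V \<iota> - U \<iota>)) + t\<^sup>2 * (V \<iota> - U \<iota>)\<^sup>2)"
    by (rule sum.cong) (simp_all add: power2_eq_square algebra_simps)
  then show ?thesis by (simp add: sum.distrib sum_subtractf sum_distrib_left)
qed

lemma prox_min_quadratic_growth:
  assumes P: "convex_functional P" and U: "is_prox_min I X P U" and V: "V \<in> zero_outside I"
  shows "prox_obj I X P U + 1/2 * (\<Sum>\<iota>\<in>I. (V \<iota> - U \<iota>)\<^sup>2) \<le> prox_obj I X P V"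
proof -
  define S where "S = (\<Sum>\<iota>\<in>I. (X \<iota> - U \<iota>) * (V \<iota> - U \<iota>))"
  define q where "q = (\<Sum>\<iota>\<in>I. (V \<iota> - U \<iota>)\<^sup>2)"
  define a where "a = P V - P U - S"
  \<comment> \<open>\<open>a\<close> bounds the one-sided derivative of the objective at \<open>U\<close> in direction \<open>V - U\<close>.\<close>
  have obj_V: "prox_obj I X P V = prox_obj I X P U + a + q / 2"
    using sum_squares_convex_comb[of X "1::real" U V I]
    by (simp add: prox_obj_def a_def S_def q_def algebra_simps)
  have "0 \<le> a + t / 2 * q" if t: "0 < t" "t \<le> 1" for t
  proof -
    have "(\<lambda>\<iota>. (1 - t) * U \<iota> + t * V \<iota>) \<in> zero_outside I"
      using U V by (auto simp: zero_outside_def is_prox_min_def)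
    then have "prox_obj I X P U \<le> prox_obj I X P (\<lambda>\<iota>. (1 - t) * U \<iota> + t * V \<iota>)"
      using U by (simp add: is_prox_min_def)
    also have "\<dots> \<le> prox_obj I X P U - t * S + t\<^sup>2 / 2 * q + t * (P V - P U)"
    proof -
      have "P (\<lambda>\<iota>. (1 - t) * U \<iota> + t * V \<iota>) \<le> (1 - t) * P U + t * P V"
        using P t unfolding convex_functional_def by simp
      then show ?thesis
        unfolding prox_obj_def sum_squares_convex_comb S_def q_def by (simp add: algebra_simps)
    qed
    finally have "0 \<le> t * (a + t / 2 * q)"
      by (simp add: a_def power2_eq_square algebra_simps)
    then show ?thesis using t by (simp add: zero_le_mult_iff)
  qed
  then have "\<forall>\<^sub>F t in at_right 0. 0 \<le> a + t / 2 * q"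
    unfolding eventually_at_right_field by (intro exI[of _ 1]) auto
  moreover have "((\<lambda>t. a + t / 2 * q) \<longlongrightarrow> a) (at_right 0)"
    by (auto intro!: tendsto_eq_intros)
  ultimately have "0 \<le> a"
    by (intro tendsto_lowerbound) auto
  then show ?thesis using obj_V by (simp add: q_def)
qed

lemma prox_min_unique:
  assumes P: "convex_functional P" and U: "is_prox_min I X P U" and V: "is_prox_min I X P V"
    and I: "finite I"
  shows "U = V"
proof
  fix \<kappa>
  have "prox_obj I X P U + 1/2 * (\<Sum>\<iota>\<in>I. (V \<iota> - U \<iota>)\<^sup>2) \<le> prox_obj I X P V"
    using V by (intro prox_min_quadratic_growth[OF P U]) (simp add: is_prox_min_def)
  moreover have "prox_obj I X P V \<le> prox_obj I X P U"
    using U V by (simp add: is_prox_min_def)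
  moreover have "0 \<le> (\<Sum>\<iota>\<in>I. (V \<iota> - U \<iota>)\<^sup>2)"
    by (simp add: sum_nonneg)
  ultimately have "(\<Sum>\<iota>\<in>I. (V \<iota> - U \<iota>)\<^sup>2) = 0"
    by linarith
  then have "\<forall>\<iota>\<in>I. U \<iota> = V \<iota>"
    using I by (simp add: sum_nonneg_eq_0_iff)
  then show "U \<kappa> = V \<kappa>"
    using U V by (cases "\<kappa> \<in> I") (auto simp: is_prox_min_def zero_outside_def)
qed

lemma compact_PiE_UNIV:
  fixes S :: "'a \<Rightarrow> real set"
  assumes "\<And>i. compact (S i)"
  shows "compact (Pi\<^sub>E UNIV S)"
proof -
  have "compactin (product_topology (\<lambda>i. euclidean) UNIV) (Pi\<^sub>E UNIV S)"
    using assms by (simp add: compactin_PiE)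
  then show ?thesis by (simp add: euclidean_product_topology)
qed

lemma continuous_on_prox_obj:
  assumes "continuous_on UNIV P"
  shows "continuous_on A (prox_obj I X P)"
  unfolding prox_obj_def
  by (intro continuous_intros continuous_on_subset[OF assms]
      continuous_on_subset[OF continuous_on_product_coordinates]) auto

text \<open>A minimiser over the compact box of radius \<open>\<parallel>X\<parallel>\<close> around \<open>X\<close> is global: the box contains
  \<open>0\<close>, and outside the box the quadratic term alone exceeds the objective value at \<open>0\<close>.\<close>
lemma prox_min_exists:
  assumes I: "finite I" and P_cont: "continuous_on UNIV P"
    and P_nonneg: "\<And>U. 0 \<le> P U" and P_zero: "P (\<lambda>_. 0) = 0"
  shows "\<exists>U. is_prox_min I X P U"
proof -
  define r where "r = L2_set X I"
  define K where "K = Pi\<^sub>E UNIV (\<lambda>\<iota>. if \<iota> \<in> I then cball (X \<iota>) r else {0})"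
  have "compact K"
    unfolding K_def by (intro compact_PiE_UNIV) auto
  have K_sub: "K \<subseteq> zero_outside I"
    by (auto simp: K_def zero_outside_def PiE_iff) (metis singletonD)
  have X_le_r: "\<bar>X \<iota>\<bar> \<le> r" if "\<iota> \<in> I" for \<iota>
    using member_le_L2_set[OF I that, of "\<lambda>\<iota>. \<bar>X \<iota>\<bar>"] by (simp add: r_def L2_set_def)
  have zero_K: "(\<lambda>_. 0) \<in> K"
    using X_le_r by (auto simp: K_def PiE_iff dist_real_def)
  obtain U where "U \<in> K" and U_min: "\<And>V. V \<in> K \<Longrightarrow> prox_obj I X P U \<le> prox_obj I X P V"
    using continuous_attains_inf[OF \<open>compact K\<close> _ continuous_on_prox_obj[OF P_cont]] zero_K by blast
  have obj_zero: "prox_obj I X P (\<lambda>_. 0) = 1/2 * r\<^sup>2"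
    by (simp add: prox_obj_def P_zero r_def L2_set_def sum_nonneg)
  have "prox_obj I X P U \<le> prox_obj I X P V" if V: "V \<in> zero_outside I" for V
  proof (cases "V \<in> K")
    case False
    then obtain \<kappa> where "\<kappa> \<in> I" and "r < \<bar>X \<kappa> - V \<kappa>\<bar>"
      using V by (auto simp: K_def PiE_iff zero_outside_def dist_real_def split: if_splits)
        (metis linorder_not_le)
    then have "r\<^sup>2 < \<bar>X \<kappa> - V \<kappa>\<bar>\<^sup>2"
      by (intro power_strict_mono) (auto simp: r_def)
    also have "\<dots> = (X \<kappa> - V \<kappa>)\<^sup>2"
      by simp
    also have "\<dots> \<le> (\<Sum>\<iota>\<in>I. (X \<iota> - V \<iota>)\<^sup>2)"
      using I \<open>\<kappa> \<in> I\<close> by (intro member_le_sum) auto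
    finally have "1/2 * r\<^sup>2 \<le> prox_obj I X P V"
      using P_nonneg[of V] by (simp add: prox_obj_def)
    then show ?thesis
      using U_min[OF zero_K] obj_zero by linarith
  qed (rule U_min)
  then show ?thesis
    using \<open>U \<in> K\<close> K_sub by (auto simp: is_prox_min_def)
qed

lemma sum_squares_cross:
  fixes X X0 U U0 :: "'a \<Rightarrow> real"
  shows "1/2 * ((\<Sum>\<iota>\<in>I. (X \<iota> - U0 \<iota>)\<^sup>2) - (\<Sum>\<iota>\<in>I. (X \<iota> - U \<iota>)\<^sup>2)
      + (\<Sum>\<iota>\<in>I. (X0 \<iota> - U \<iota>)\<^sup>2) - (\<Sum>\<iota>\<in>I. (X0 \<iota> - U0 \<iota>)\<^sup>2))
    = (\<Sum>\<iota>\<in>I. (X \<iota> - X0 \<iota>) * (U \<iota> - U0 \<iota>))"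
proof -
  have "(\<Sum>\<iota>\<in>I. (X \<iota> - U0 \<iota>)\<^sup>2) - (\<Sum>\<iota>\<in>I. (X \<iota> - U \<iota>)\<^sup>2)
      + (\<Sum>\<iota>\<in>I. (X0 \<iota> - U \<iota>)\<^sup>2) - (\<Sum>\<iota>\<in>I. (X0 \<iota> - U0 \<iota>)\<^sup>2)
    = (\<Sum>\<iota>\<in>I. (X \<iota> - U0 \<iota>)\<^sup>2 - (X \<iota> - U \<iota>)\<^sup>2 + (X0 \<iota> - U \<iota>)\<^sup>2 - (X0 \<iota> - U0 \<iota>)\<^sup>2)"
    by (simp add: sum_subtractf sum.distrib)
  also have "\<dots> = (\<Sum>\<iota>\<in>I. 2 * ((X \<iota> - X0 \<iota>) * (U \<iota> - U0 \<iota>)))"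
    by (rule sum.cong) (simp_all add: power2_eq_square algebra_simps)
  finally show ?thesis by (simp add: sum_distrib_left)
qed

lemma prox_min_lipschitz:
  assumes P: "convex_functional P" and P0: "convex_functional P0"
    and U: "is_prox_min I X P U" and U0: "is_prox_min I X0 P0 U0"
    and L: "0 \<le> L"
    and lip: "\<And>V V'. V \<in> zero_outside I \<Longrightarrow> V' \<in> zero_outside I \<Longrightarrow>
      (P V - P0 V) - (P V' - P0 V') \<le> L * L2_set (\<lambda>\<iota>. V \<iota> - V' \<iota>) I"
  shows "L2_set (\<lambda>\<iota>. U \<iota> - U0 \<iota>) I \<le> L2_set (\<lambda>\<iota>. X \<iota> - X0 \<iota>) I + L"
proof -
  define N where "N = L2_set (\<lambda>\<iota>. U \<iota> - U0 \<iota>) I"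
  have "U \<in> zero_outside I" "U0 \<in> zero_outside I"
    using U U0 by (auto simp: is_prox_min_def)
  have N_sq: "N\<^sup>2 = (\<Sum>\<iota>\<in>I. (U \<iota> - U0 \<iota>)\<^sup>2)"
    by (simp add: N_def L2_set_def sum_nonneg)
  have "N\<^sup>2 \<le> (\<Sum>\<iota>\<in>I. (X \<iota> - X0 \<iota>) * (U \<iota> - U0 \<iota>)) + ((P U0 - P0 U0) - (P U - P0 U))"
  proof -
    have "prox_obj I X P U + 1/2 * (\<Sum>\<iota>\<in>I. (U0 \<iota> - U \<iota>)\<^sup>2) \<le> prox_obj I X P U0"
      by (rule prox_min_quadratic_growth[OF P U \<open>U0 \<in> zero_outside I\<close>])
    moreover have "prox_obj I X0 P0 U0 + 1/2 * (\<Sum>\<iota>\<in>I. (U \<iota> - U0 \<iota>)\<^sup>2) \<le> prox_obj I X0 P0 U"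
      by (rule prox_min_quadratic_growth[OF P0 U0 \<open>U \<in> zero_outside I\<close>])
    moreover have "(\<Sum>\<iota>\<in>I. (U0 \<iota> - U \<iota>)\<^sup>2) = (\<Sum>\<iota>\<in>I. (U \<iota> - U0 \<iota>)\<^sup>2)"
      by (simp add: power2_commute)
    ultimately show ?thesis
      using sum_squares_cross[of X U0 I U X0] by (simp add: N_sq prox_obj_def)
  qed
  also have "\<dots> \<le> L2_set (\<lambda>\<iota>. X \<iota> - X0 \<iota>) I * N + L * N"
  proof (rule add_mono)
    show "(\<Sum>\<iota>\<in>I. (X \<iota> - X0 \<iota>) * (U \<iota> - U0 \<iota>)) \<le> L2_set (\<lambda>\<iota>. X \<iota> - X0 \<iota>) I * N"
    proof -
      have "(\<Sum>\<iota>\<in>I. (X \<iota> - X0 \<iota>) * (U \<iota> - U0 \<iota>)) \<le> (\<Sum>\<iota>\<in>I. \<bar>X \<iota> - X0 \<iota>\<bar> * \<bar>U \<iota> - U0 \<iota>\<bar>)"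
        by (intro sum_mono) (simp flip: abs_mult)
      then show ?thesis
        unfolding N_def using L2_set_mult_ineq[of "\<lambda>\<iota>. X \<iota> - X0 \<iota>" "\<lambda>\<iota>. U \<iota> - U0 \<iota>" I]
        by linarith
    qed
    show "(P U0 - P0 U0) - (P U - P0 U) \<le> L * N"
      unfolding N_def using lip[OF \<open>U0 \<in> zero_outside I\<close> \<open>U \<in> zero_outside I\<close>]
      by (simp add: L2_set_def power2_commute)
  qed
  finally have "N * N \<le> (L2_set (\<lambda>\<iota>. X \<iota> - X0 \<iota>) I + L) * N"
    by (simp add: power2_eq_square algebra_simps)
  moreover have "0 \<le> N" "0 \<le> L2_set (\<lambda>\<iota>. X \<iota> - X0 \<iota>) I + L"
    using L by (auto simp: N_def)
  ultimately show ?thesis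
    unfolding N_def[symmetric] using mult_right_le_imp_le[of N N] by (cases "N = 0") auto
qed

lemma idx_set_finite: "finite (idx_set D n)"
proof (rule finite_subset)
  show "idx_set D n \<subseteq> (\<lambda>f d. if d < D then f d else 0) ` Pi\<^sub>E {..<D} (\<lambda>d. {..<n d})"
  proof
    fix \<iota> assume \<iota>: "\<iota> \<in> idx_set D n"
    then have "restrict \<iota> {..<D} \<in> Pi\<^sub>E {..<D} (\<lambda>d. {..<n d})"
      by (auto simp: idx_set_def)
    moreover have "\<iota> = (\<lambda>d. if d < D then restrict \<iota> {..<D} d else 0)"
      using \<iota> by (auto simp: idx_set_def)
    ultimately show "\<iota> \<in> (\<lambda>f d. if d < D then f d else 0) ` Pi\<^sub>E {..<D} (\<lambda>d. {..<n d})"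
      by blast
  qed
qed (simp add: finite_PiE)

lemma tensors_eq_zero_outside: "tensors D n = zero_outside (idx_set D n)"
  by (simp add: tensors_def zero_outside_def)

lemma frob_eq_L2_set: "frob D n U = L2_set U (idx_set D n)"
  by (simp add: frob_def L2_set_def)

lemma frob_nonneg: "0 \<le> frob D n U"
  by (simp add: frob_eq_L2_set)

lemma abs_le_frob:
  assumes "U \<in> tensors D n"
  shows "\<bar>U \<kappa>\<bar> \<le> frob D n U"
proof (cases "\<kappa> \<in> idx_set D n")
  case True
  then show ?thesis
    using member_le_L2_set[OF idx_set_finite True, of "\<lambda>\<iota>. \<bar>U \<iota>\<bar>"]
    by (simp add: frob_def L2_set_def)
next
  case False
  then show ?thesis
    using assms by (simp add: tensors_def frob_eq_L2_set)
qed

definition slice_dist :: "nat \<Rightarrow> (nat \<Rightarrow> nat) \<Rightarrow> nat \<Rightarrow> nat \<Rightarrow> nat \<Rightarrow> ((nat \<Rightarrow> nat) \<Rightarrow> real) \<Rightarrow> real"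
  where "slice_dist D n d i j U = frob D (n(d := 1)) (mode_prod d (n d) U (Delta i j))"

definition slice_lip :: "nat \<Rightarrow> (nat \<Rightarrow> nat) \<Rightarrow> nat \<Rightarrow> real" where
  "slice_lip D n d = real (card (idx_set D (n(d := 1)))) * real (n d)"

definition penalty :: "nat \<Rightarrow> (nat \<Rightarrow> nat) \<Rightarrow> real \<Rightarrow> (nat \<Rightarrow> nat \<Rightarrow> nat \<Rightarrow> real)
    \<Rightarrow> ((nat \<Rightarrow> nat) \<Rightarrow> real) \<Rightarrow> real" where
  "penalty D n \<gamma> w U = \<gamma> * (\<Sum>d<D. \<Sum>i<n d. \<Sum>j\<in>{i<..<n d}. w d i j * slice_dist D n d i j U)"

lemma objective_eq_prox_obj:
  "objective D n X \<gamma> w = prox_obj (idx_set D n) X (penalty D n \<gamma> w)"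
  by (simp add: fun_eq_iff objective_def prox_obj_def penalty_def slice_dist_def frob_def sum_nonneg)

lemma is_minimizer_eq_is_prox_min:
  "is_minimizer D n X \<gamma> w = is_prox_min (idx_set D n) X (penalty D n \<gamma> w)"
  by (simp add: fun_eq_iff is_minimizer_def is_prox_min_def objective_eq_prox_obj
      tensors_eq_zero_outside)

lemma mode_prod_lincomb:
  "mode_prod d m (\<lambda>\<iota>. a * U \<iota> + b * V \<iota>) B
     = (\<lambda>\<iota>. a * mode_prod d m U B \<iota> + b * mode_prod d m V B \<iota>)"
  by (simp add: fun_eq_iff mode_prod_def sum.distrib sum_distrib_left algebra_simps)

lemma mode_prod_diff:
  "mode_prod d m (\<lambda>\<iota>. U \<iota> - V \<iota>) B = (\<lambda>\<iota>. mode_prod d m U B \<iota> - mode_prod d m V B \<iota>)"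
  by (simp add: fun_eq_iff mode_prod_def sum_subtractf left_diff_distrib)

lemma slice_dist_convex_comb:
  assumes "0 \<le> t" "t \<le> 1"
  shows "slice_dist D n d i j (\<lambda>\<iota>. (1 - t) * U \<iota> + t * V \<iota>)
    \<le> (1 - t) * slice_dist D n d i j U + t * slice_dist D n d i j V"
  using assms L2_set_triangle_ineq
  by (simp add: slice_dist_def frob_eq_L2_set mode_prod_lincomb L2_set_right_distrib)

lemma slice_dist_diff_abs_le:
  "\<bar>slice_dist D n d i j U - slice_dist D n d i j V\<bar> \<le> slice_dist D n d i j (\<lambda>\<iota>. U \<iota> - V \<iota>)"
  unfolding slice_dist_def frob_eq_L2_set mode_prod_diff by (rule L2_set_diff_abs_le)

text \<open>A crude constant: each entry of \<open>U \<times>\<^sub>d \<Delta>\<close> is a sum of \<open>n d\<close> terms bounded by \<open>\<parallel>U\<parallel>\<close>.\<close>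
lemma slice_dist_le:
  assumes U: "U \<in> tensors D n"
  shows "slice_dist D n d i j U \<le> slice_lip D n d * frob D n U"
proof -
  have entry: "\<bar>mode_prod d (n d) U (Delta i j) \<iota>\<bar> \<le> real (n d) * frob D n U" for \<iota>
  proof -
    have "\<bar>mode_prod d (n d) U (Delta i j) \<iota>\<bar> \<le> (\<Sum>k<n d. \<bar>U (\<iota>(d := k))\<bar> * \<bar>Delta i j (\<iota> d) k\<bar>)"
      unfolding mode_prod_def abs_mult[symmetric] by (rule sum_abs)
    also have "\<dots> \<le> (\<Sum>k<n d. frob D n U)"
      using abs_le_frob[OF U] frob_nonneg
      by (intro sum_mono mult_right_le_one_le) (auto simp: Delta_def)
    finally show ?thesis by simp
  qed
  have "slice_dist D n d i j U \<le> (\<Sum>\<iota>\<in>idx_set D (n(d := 1)). \<bar>mode_prod d (n d) U (Delta i j) \<iota>\<bar>)"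
    unfolding slice_dist_def frob_eq_L2_set by (rule L2_set_le_sum_abs)
  also have "\<dots> \<le> (\<Sum>\<iota>\<in>idx_set D (n(d := 1)). real (n d) * frob D n U)"
    by (intro sum_mono entry)
  finally show ?thesis by (simp add: slice_lip_def)
qed

lemma penalty_convex:
  assumes "0 \<le> \<gamma>" "\<forall>d<D. \<forall>i j. i < j \<and> j < n d \<longrightarrow> 0 \<le> w d i j"
  shows "convex_functional (penalty D n \<gamma> w)"
  unfolding convex_functional_def
proof (intro allI impI)
  fix U V :: "(nat \<Rightarrow> nat) \<Rightarrow> real" and t :: real
  assume t: "0 \<le> t \<and> t \<le> 1"
  let ?sum = "\<lambda>f. \<Sum>d<D. \<Sum>i<n d. \<Sum>j\<in>{i<..<n d}. w d i j * f d i j"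
  have "?sum (\<lambda>d i j. slice_dist D n d i j (\<lambda>\<iota>. (1 - t) * U \<iota> + t * V \<iota>))
     \<le> ?sum (\<lambda>d i j. (1 - t) * slice_dist D n d i j U + t * slice_dist D n d i j V)"
    using assms t by (intro sum_mono mult_left_mono slice_dist_convex_comb) auto
  also have "\<dots> = (1 - t) * ?sum (\<lambda>d i j. slice_dist D n d i j U)
      + t * ?sum (\<lambda>d i j. slice_dist D n d i j V)"
    by (simp add: sum_distrib_left sum.distrib distrib_left mult.left_commute)
  finally have "\<gamma> * ?sum (\<lambda>d i j. slice_dist D n d i j (\<lambda>\<iota>. (1 - t) * U \<iota> + t * V \<iota>))
      \<le> \<gamma> * ((1 - t) * ?sum (\<lambda>d i j. slice_dist D n d i j U)
        + t * ?sum (\<lambda>d i j. slice_dist D n d i j V))"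
    by (rule mult_left_mono[OF _ assms(1)])
  then show "penalty D n \<gamma> w (\<lambda>\<iota>. (1 - t) * U \<iota> + t * V \<iota>)
      \<le> (1 - t) * penalty D n \<gamma> w U + t * penalty D n \<gamma> w V"
    unfolding penalty_def by (simp only: distrib_left mult.left_commute)
qed

lemma penalty_nonneg:
  assumes "0 \<le> \<gamma>" "\<forall>d<D. \<forall>i j. i < j \<and> j < n d \<longrightarrow> 0 \<le> w d i j"
  shows "0 \<le> penalty D n \<gamma> w U"
  unfolding penalty_def slice_dist_def frob_eq_L2_set using assms
  by (intro mult_nonneg_nonneg sum_nonneg) auto

lemma penalty_zero: "penalty D n \<gamma> w (\<lambda>_. 0) = 0"
  by (simp add: penalty_def slice_dist_def mode_prod_def frob_def)

lemma continuous_on_penalty: "continuous_on A (penalty D n \<gamma> w)"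
  unfolding penalty_def slice_dist_def frob_def mode_prod_def
  by (intro continuous_intros continuous_on_subset[OF continuous_on_product_coordinates]) auto

definition penalty_lip :: "nat \<Rightarrow> (nat \<Rightarrow> nat) \<Rightarrow> real \<Rightarrow> (nat \<Rightarrow> nat \<Rightarrow> nat \<Rightarrow> real)
    \<Rightarrow> real \<Rightarrow> (nat \<Rightarrow> nat \<Rightarrow> nat \<Rightarrow> real) \<Rightarrow> real" where
  "penalty_lip D n \<gamma> w \<gamma>0 w0 =
     (\<Sum>d<D. \<Sum>i<n d. \<Sum>j\<in>{i<..<n d}. \<bar>\<gamma> * w d i j - \<gamma>0 * w0 d i j\<bar> * slice_lip D n d)"

lemma penalty_lip_nonneg: "0 \<le> penalty_lip D n \<gamma> w \<gamma>0 w0"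
  unfolding penalty_lip_def slice_lip_def by (intro sum_nonneg) auto

lemma penalty_diff_eq:
  "(penalty D n \<gamma> w V - penalty D n \<gamma>0 w0 V) - (penalty D n \<gamma> w V' - penalty D n \<gamma>0 w0 V')
    = (\<Sum>d<D. \<Sum>i<n d. \<Sum>j\<in>{i<..<n d}.
        (\<gamma> * w d i j - \<gamma>0 * w0 d i j) * (slice_dist D n d i j V - slice_dist D n d i j V'))"
  by (simp add: penalty_def sum_distrib_left sum_subtractf left_diff_distrib right_diff_distrib
      mult.assoc)

lemma penalty_diff_le:
  assumes V: "V \<in> tensors D n" and V': "V' \<in> tensors D n"
  shows "(penalty D n \<gamma> w V - penalty D n \<gamma>0 w0 V) - (penalty D n \<gamma> w V' - penalty D n \<gamma>0 w0 V')
    \<le> penalty_lip D n \<gamma> w \<gamma>0 w0 * frob D n (\<lambda>\<iota>. V \<iota> - V' \<iota>)"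
proof -
  have "(\<lambda>\<iota>. V \<iota> - V' \<iota>) \<in> tensors D n"
    using V V' by (simp add: tensors_def)
  then have slice_diff: "\<bar>slice_dist D n d i j V - slice_dist D n d i j V'\<bar>
      \<le> slice_lip D n d * frob D n (\<lambda>\<iota>. V \<iota> - V' \<iota>)" for d i j
    by (rule order_trans[OF slice_dist_diff_abs_le slice_dist_le])
  have "c * (slice_dist D n d i j V - slice_dist D n d i j V')
      \<le> \<bar>c\<bar> * slice_lip D n d * frob D n (\<lambda>\<iota>. V \<iota> - V' \<iota>)" for c d i j
  proof -
    have "c * (slice_dist D n d i j V - slice_dist D n d i j V')
        \<le> \<bar>c\<bar> * \<bar>slice_dist D n d i j V - slice_dist D n d i j V'\<bar>"
      using abs_ge_self[of "c * (slice_dist D n d i j V - slice_dist D n d i j V')"]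
      by (simp add: abs_mult)
    also have "\<dots> \<le> \<bar>c\<bar> * (slice_lip D n d * frob D n (\<lambda>\<iota>. V \<iota> - V' \<iota>))"
      by (rule mult_left_mono[OF slice_diff abs_ge_zero])
    finally show ?thesis
      by (simp add: mult.assoc)
  qed
  then show ?thesis
    unfolding penalty_diff_eq penalty_lip_def sum_distrib_right by (intro sum_mono)
qed

lemma minimizer_exists_unique:
  assumes "admissible D n X \<gamma> w"
  shows "\<exists>!U. is_minimizer D n X \<gamma> w U"
proof -
  have \<gamma>: "0 \<le> \<gamma>" and w: "\<forall>d<D. \<forall>i j. i < j \<and> j < n d \<longrightarrow> 0 \<le> w d i j"
    using assms by (simp_all add: admissible_def)
  have "\<exists>U. is_prox_min (idx_set D n) X (penalty D n \<gamma> w) U"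
    by (rule prox_min_exists[OF idx_set_finite continuous_on_penalty penalty_nonneg[OF \<gamma> w]
          penalty_zero])
  moreover have "U = V"
    if "is_prox_min (idx_set D n) X (penalty D n \<gamma> w) U"
      "is_prox_min (idx_set D n) X (penalty D n \<gamma> w) V" for U V
    by (rule prox_min_unique[OF penalty_convex[OF \<gamma> w] that idx_set_finite])
  ultimately show ?thesis
    unfolding is_minimizer_eq_is_prox_min by blast
qed

lemma minimizer_is_minimizer:
  assumes "admissible D n X \<gamma> w"
  shows "is_minimizer D n X \<gamma> w (minimizer D n X \<gamma> w)"
  unfolding minimizer_def using minimizer_exists_unique[OF assms] by (rule theI')

lemma minimizer_lipschitz:
  assumes adm: "admissible D n X \<gamma> w" and adm0: "admissible D n X0 \<gamma>0 w0"
  shows "frob D n (\<lambda>\<iota>. minimizer D n X \<gamma> w \<iota> - minimizer D n X0 \<gamma>0 w0 \<iota>)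
    \<le> frob D n (\<lambda>\<iota>. X \<iota> - X0 \<iota>) + penalty_lip D n \<gamma> w \<gamma>0 w0"
  unfolding frob_eq_L2_set
proof (rule prox_min_lipschitz)
  show "convex_functional (penalty D n \<gamma> w)" "convex_functional (penalty D n \<gamma>0 w0)"
    using adm adm0 by (simp_all add: admissible_def penalty_convex)
  show "is_prox_min (idx_set D n) X (penalty D n \<gamma> w) (minimizer D n X \<gamma> w)"
    "is_prox_min (idx_set D n) X0 (penalty D n \<gamma>0 w0) (minimizer D n X0 \<gamma>0 w0)"
    using minimizer_is_minimizer[OF adm] minimizer_is_minimizer[OF adm0]
    by (simp_all add: is_minimizer_eq_is_prox_min)
  show "0 \<le> penalty_lip D n \<gamma> w \<gamma>0 w0"
    by (rule penalty_lip_nonneg)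
  show "(penalty D n \<gamma> w V - penalty D n \<gamma>0 w0 V) - (penalty D n \<gamma> w V' - penalty D n \<gamma>0 w0 V')
      \<le> penalty_lip D n \<gamma> w \<gamma>0 w0 * L2_set (\<lambda>\<iota>. V \<iota> - V' \<iota>) (idx_set D n)"
    if "V \<in> zero_outside (idx_set D n)" "V' \<in> zero_outside (idx_set D n)" for V V'
    using penalty_diff_le that by (simp add: tensors_eq_zero_outside frob_eq_L2_set)
qed

lemma frob_diff_le_param_dist:
  "frob D n (\<lambda>\<iota>. X \<iota> - X0 \<iota>) \<le> param_dist D n X \<gamma> w X0 \<gamma>0 w0"
proof -
  have "0 \<le> (\<Sum>d<D. \<Sum>i<n d. \<Sum>j\<in>{i<..<n d}. (w d i j - w0 d i j)\<^sup>2)"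
    by (intro sum_nonneg) auto
  then show ?thesis
    unfolding frob_def param_dist_def by (intro real_sqrt_le_mono) simp
qed

lemma abs_gamma_diff_le_param_dist:
  "\<bar>\<gamma> - \<gamma>0\<bar> \<le> param_dist D n X \<gamma> w X0 \<gamma>0 w0"
proof -
  have "0 \<le> (\<Sum>\<iota>\<in>idx_set D n. (X \<iota> - X0 \<iota>)\<^sup>2)"
    "0 \<le> (\<Sum>d<D. \<Sum>i<n d. \<Sum>j\<in>{i<..<n d}. (w d i j - w0 d i j)\<^sup>2)"
    by (intro sum_nonneg; auto)+
  then show ?thesis
    unfolding param_dist_def by (intro real_le_rsqrt) simp
qed

lemma abs_weight_diff_le_param_dist:
  assumes "d < D" "i < j" "j < n d"
  shows "\<bar>w d i j - w0 d i j\<bar> \<le> param_dist D n X \<gamma> w X0 \<gamma>0 w0"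
proof -
  have "(w d i j - w0 d i j)\<^sup>2 \<le> (\<Sum>j\<in>{i<..<n d}. (w d i j - w0 d i j)\<^sup>2)"
    using assms by (intro member_le_sum) auto
  also have "\<dots> \<le> (\<Sum>i<n d. \<Sum>j\<in>{i<..<n d}. (w d i j - w0 d i j)\<^sup>2)"
    using assms by (intro member_le_sum[where f = "\<lambda>i. \<Sum>j\<in>{i<..<n d}. _ i j"] sum_nonneg) auto
  also have "\<dots> \<le> (\<Sum>d<D. \<Sum>i<n d. \<Sum>j\<in>{i<..<n d}. (w d i j - w0 d i j)\<^sup>2)"
    using assms by (intro member_le_sum[where f = "\<lambda>d. \<Sum>i<n d. \<Sum>j\<in>{i<..<n d}. _ d i j"] sum_nonneg) auto
  finally have "(w d i j - w0 d i j)\<^sup>2 \<le> \<dots>" .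
  moreover have "0 \<le> (\<Sum>\<iota>\<in>idx_set D n. (X \<iota> - X0 \<iota>)\<^sup>2)"
    by (intro sum_nonneg) auto
  ultimately show ?thesis
    unfolding param_dist_def using zero_le_power2[of "\<gamma> - \<gamma>0"]
    by (intro real_le_rsqrt) (simp only: power2_abs; linarith)
qed

lemma abs_mult_diff_le:
  fixes a a0 b b0 p :: real
  assumes "\<bar>a - a0\<bar> \<le> p" "\<bar>b - b0\<bar> \<le> p" "p \<le> 1"
  shows "\<bar>a * b - a0 * b0\<bar> \<le> p * (\<bar>a0\<bar> + \<bar>b0\<bar> + 1)"
proof -
  have "a * b - a0 * b0 = (a - a0) * (b - b0) + (a - a0) * b0 + a0 * (b - b0)"
    by (simp add: algebra_simps)
  also have "\<bar>\<dots>\<bar> \<le> \<bar>a - a0\<bar> * \<bar>b - b0\<bar> + \<bar>a - a0\<bar> * \<bar>b0\<bar> + \<bar>a0\<bar> * \<bar>b - b0\<bar>"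
    using abs_triangle_ineq[of "(a - a0) * (b - b0) + (a - a0) * b0" "a0 * (b - b0)"]
      abs_triangle_ineq[of "(a - a0) * (b - b0)" "(a - a0) * b0"]
    unfolding abs_mult by linarith
  also have "\<dots> \<le> p * 1 + p * \<bar>b0\<bar> + \<bar>a0\<bar> * p"
    using assms by (intro add_mono mult_mono) auto
  finally show ?thesis
    by (simp add: algebra_simps)
qed

lemma minimizer_locally_lipschitz:
  assumes adm0: "admissible D n X0 \<gamma>0 w0"
  obtains K where "0 \<le> K"
    and "\<And>X \<gamma> w. admissible D n X \<gamma> w \<Longrightarrow> param_dist D n X \<gamma> w X0 \<gamma>0 w0 \<le> 1 \<Longrightarrow>
      frob D n (\<lambda>\<iota>. minimizer D n X \<gamma> w \<iota> - minimizer D n X0 \<gamma>0 w0 \<iota>)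
        \<le> K * param_dist D n X \<gamma> w X0 \<gamma>0 w0"
proof
  define S where "S = (\<Sum>d<D. \<Sum>i<n d. \<Sum>j\<in>{i<..<n d}. (\<bar>\<gamma>0\<bar> + \<bar>w0 d i j\<bar> + 1) * slice_lip D n d)"
  show "0 \<le> 1 + S"
    unfolding S_def slice_lip_def by (intro add_nonneg_nonneg sum_nonneg mult_nonneg_nonneg) auto
  fix X \<gamma> w
  assume adm: "admissible D n X \<gamma> w" and p_le: "param_dist D n X \<gamma> w X0 \<gamma>0 w0 \<le> 1"
  let ?p = "param_dist D n X \<gamma> w X0 \<gamma>0 w0"
  have "penalty_lip D n \<gamma> w \<gamma>0 w0
      \<le> (\<Sum>d<D. \<Sum>i<n d. \<Sum>j\<in>{i<..<n d}. ?p * (\<bar>\<gamma>0\<bar> + \<bar>w0 d i j\<bar> + 1) * slice_lip D n d)"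
    unfolding penalty_lip_def slice_lip_def
    using abs_gamma_diff_le_param_dist abs_weight_diff_le_param_dist p_le
    by (intro sum_mono mult_right_mono abs_mult_diff_le) auto
  also have "\<dots> = ?p * S"
    by (simp add: S_def sum_distrib_left mult.assoc)
  finally have "penalty_lip D n \<gamma> w \<gamma>0 w0 \<le> ?p * S" .
  then show "frob D n (\<lambda>\<iota>. minimizer D n X \<gamma> w \<iota> - minimizer D n X0 \<gamma>0 w0 \<iota>) \<le> (1 + S) * ?p"
    using minimizer_lipschitz[OF adm adm0] frob_diff_le_param_dist[of D n X X0 \<gamma> w \<gamma>0 w0]
    by (simp add: algebra_simps)
qed

theorem proposition4p1:
  fixes D :: nat and n :: "nat \<Rightarrow> nat"
  assumes "1 \<le> D" and "\<forall>d<D. 1 \<le> n d"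
  shows "(\<forall>X \<gamma> w. admissible D n X \<gamma> w \<longrightarrow> (\<exists>!U. is_minimizer D n X \<gamma> w U))
    \<and> (\<forall>X0 \<gamma>0 w0. admissible D n X0 \<gamma>0 w0 \<longrightarrow>
        (\<forall>\<epsilon>>0. \<exists>\<delta>>0. \<forall>X \<gamma> w. admissible D n X \<gamma> w \<and> param_dist D n X \<gamma> w X0 \<gamma>0 w0 < \<delta> \<longrightarrow>
           frob D n (\<lambda>\<iota>. minimizer D n X \<gamma> w \<iota> - minimizer D n X0 \<gamma>0 w0 \<iota>) < \<epsilon>))"
proof (intro conjI allI impI)
  show "\<exists>!U. is_minimizer D n X \<gamma> w U" if "admissible D n X \<gamma> w" for X \<gamma> w
    using that by (rule minimizer_exists_unique)
  fix X0 \<gamma>0 w0 and \<epsilon> :: real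
  assume adm0: "admissible D n X0 \<gamma>0 w0" and "0 < \<epsilon>"
  obtain K where "0 \<le> K" and K: "\<And>X \<gamma> w. admissible D n X \<gamma> w \<Longrightarrow>
      param_dist D n X \<gamma> w X0 \<gamma>0 w0 \<le> 1 \<Longrightarrow>
      frob D n (\<lambda>\<iota>. minimizer D n X \<gamma> w \<iota> - minimizer D n X0 \<gamma>0 w0 \<iota>)
        \<le> K * param_dist D n X \<gamma> w X0 \<gamma>0 w0"
    using minimizer_locally_lipschitz[OF adm0] by blast
  show "\<exists>\<delta>>0. \<forall>X \<gamma> w. admissible D n X \<gamma> w \<and> param_dist D n X \<gamma> w X0 \<gamma>0 w0 < \<delta> \<longrightarrow>
      frob D n (\<lambda>\<iota>. minimizer D n X \<gamma> w \<iota> - minimizer D n X0 \<gamma>0 w0 \<iota>) < \<epsilon>"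
  proof (intro exI[of _ "min 1 (\<epsilon> / (K + 1))"] conjI allI impI)
    show "0 < min 1 (\<epsilon> / (K + 1))"
      using \<open>0 < \<epsilon>\<close> \<open>0 \<le> K\<close> by simp
    fix X \<gamma> w
    assume "admissible D n X \<gamma> w \<and> param_dist D n X \<gamma> w X0 \<gamma>0 w0 < min 1 (\<epsilon> / (K + 1))"
    then have "admissible D n X \<gamma> w" "param_dist D n X \<gamma> w X0 \<gamma>0 w0 \<le> 1"
      "(K + 1) * param_dist D n X \<gamma> w X0 \<gamma>0 w0 < \<epsilon>"
      using \<open>0 \<le> K\<close> by (auto simp: field_simps)
    moreover have "K * param_dist D n X \<gamma> w X0 \<gamma>0 w0 \<le> (K + 1) * param_dist D n X \<gamma> w X0 \<gamma>0 w0"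
      by (simp add: param_dist_def sum_nonneg distrib_right)
    ultimately show "frob D n (\<lambda>\<iota>. minimizer D n X \<gamma> w \<iota> - minimizer D n X0 \<gamma>0 w0 \<iota>) < \<epsilon>"
      using K[of X \<gamma> w] by linarith
  qed
qed

end
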